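(* Let $R$ be a ring with identity and involution $*$, and let $a\in R$. The following conditions are equivalent: (1) $a$ is dual core invertible; (2) $R = a^*R \oplus a^{\circ}$ and $R = aR \oplus a^{\circ}$; (3) $R = a^*R + a^{\circ}$ and $R = aR \oplus a^{\circ}$; (4) $R = Ra \oplus {}^{\circ}(a^* )$ and $R = aR \oplus a^{\circ}$; (5) $R = Ra + {}^{\circ}(a^* )$ and $R = aR \oplus a^{\circ}$; (6) $R = a^*R \oplus a^{\circ}$ and $R = Ra \oplus {}^{\circ}a$; (7) $R = a^*R + a^{\circ}$ and $R = Ra \oplus {}^{\circ}a$; (8) $R = Ra \oplus {}^{\circ}(a^* )$ and $R = Ra \oplus {}^{\circ}a$; (9) $R = Ra + {}^{\circ}(a^* )$ and $R = Ra \oplus {}^{\circ}a$. In this case, $$a_{\oplus} = x_1^* a y_1 = x_1^* a y_2^2 a = x_2 a y_1 = x_2 a y_2^2 a,$$ where $x_1,x_2,y_1,y_2\in R$ are any elements with $1 = a^* x_1 + u_1 = x_2 a + u_2 = a y_1 + v_1 = y_2 a + v_2$ for some $u_2 \in {}^{\circ}(a^* )$, $v_2 \in {}^{\circ}a$ and $u_1, v_1 \in a^{\circ}$.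
   Context: An involution on $R$ satisfies $(a^* )^*=a$, $(ab)^*=b^*a^*$, $(a+b)^*=a^*+b^*$. An element $x\in R$ is a dual core inverse of $a$ if $axa=a$, $xR=a^*R$ and $Rx=Ra$; it is unique, denoted $a_{\oplus}$, and $a$ is then dual core invertible. For $c\in R$: $cR=\{cx: x\in R\}$, $Rc=\{xc:x\in R\}$, $c^{\circ}=\{x\in R: cx=0\}$ (right annihilator), ${}^{\circ}c=\{x\in R: xc=0\}$ (left annihilator). "$R = A \oplus B$" means $R=A+B$ with $A\cap B=\{0\}$. *)

theory Defs
  imports Main
begin

definition involution :: "('a::ring_1 \<Rightarrow> 'a) \<Rightarrow> bool" where
  "involution s \<longleftrightarrow> (\<forall>a. s (s a) = a) \<and> (\<forall>a b. s (a * b) = s b * s a)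
                     \<and> (\<forall>a b. s (a + b) = s a + s b)"

definition rprin :: "'a::ring_1 \<Rightarrow> 'a set" where "rprin c = {c * x | x. True}"
definition lprin :: "'a::ring_1 \<Rightarrow> 'a set" where "lprin c = {x * c | x. True}"
definition rann :: "'a::ring_1 \<Rightarrow> 'a set" where "rann c = {x. c * x = 0}"
definition lann :: "'a::ring_1 \<Rightarrow> 'a set" where "lann c = {x. x * c = 0}"

definition sum_all :: "'a::ring_1 set \<Rightarrow> 'a set \<Rightarrow> bool" where
  "sum_all A B \<longleftrightarrow> (\<forall>r. \<exists>x\<in>A. \<exists>y\<in>B. r = x + y)"
definition dsum_all :: "'a::ring_1 set \<Rightarrow> 'a set \<Rightarrow> bool" where
  "dsum_all A B \<longleftrightarrow> sum_all A B \<and> A \<inter> B = {0}"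

definition is_dual_core_inverse :: "('a::ring_1 \<Rightarrow> 'a) \<Rightarrow> 'a \<Rightarrow> 'a \<Rightarrow> bool" where
  "is_dual_core_inverse s a x \<longleftrightarrow> a * x * a = a \<and> rprin x = rprin (s a) \<and> lprin x = lprin a"
definition dual_core_invertible :: "('a::ring_1 \<Rightarrow> 'a) \<Rightarrow> 'a \<Rightarrow> bool" where
  "dual_core_invertible s a \<longleftrightarrow> (\<exists>x. is_dual_core_inverse s a x)"
definition dual_core_inv :: "('a::ring_1 \<Rightarrow> 'a) \<Rightarrow> 'a \<Rightarrow> 'a" where
  "dual_core_inv s a = (THE x. is_dual_core_inverse s a x)"

end

theory Submission imports Defs begin

text \<open>
  An element \<open>a\<close> is dual core invertible exactly when it is group invertible and
  \<open>a \<in> a a\<^sup>* R\<close>; if \<open>a = a a\<^sup>* x\<close> and \<open>g\<close> is the group inverse, then \<open>x\<^sup>* a g\<close> is the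
  dual core inverse. Writing \<open>1 = a y + v\<close> with \<open>v \<in> a\<^sup>\<circ>\<close>, the decomposition
  \<open>R = aR \<oplus> a\<^sup>\<circ>\<close> makes \<open>a y y\<close> a group inverse of \<open>a\<close>, and dually \<open>R = Ra \<oplus> \<^sup>\<circ>a\<close>
  makes \<open>y y a\<close> one. A decomposition \<open>1 = a\<^sup>* x + u\<close> with \<open>u \<in> a\<^sup>\<circ>\<close> gives \<open>a = a a\<^sup>* x\<close>
  after multiplying by \<open>a\<close> on the left, and \<open>1 = x a + u\<close> with \<open>u \<in> \<^sup>\<circ>(a\<^sup>*)\<close> gives
  \<open>a\<^sup>* = x a a\<^sup>*\<close>, i.e. \<open>a = a a\<^sup>* x\<^sup>*\<close>. Conversely the dual core inverse \<open>X\<close> supplies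
  the idempotents \<open>aX\<close>, \<open>aXXa\<close> and \<open>Xa\<close> splitting the four sums.
\<close>

lemma involution_invol: "involution s \<Longrightarrow> s (s x) = x"
  by (simp add: involution_def)

lemma involution_mult: "involution s \<Longrightarrow> s (x * y) = s y * s x"
  by (simp add: involution_def)

lemma rprin_eqI:
  fixes x c :: "'a::ring_1"
  assumes "x = c * p" "c = x * q"
  shows "rprin x = rprin c"
  unfolding rprin_def using assms by (auto simp: mult.assoc) (metis mult.assoc)+

lemma lprin_eqI:
  fixes x c :: "'a::ring_1"
  assumes "x = p * c" "c = q * x"
  shows "lprin x = lprin c"
  unfolding lprin_def using assms by (auto simp: mult.assoc) (metis mult.assoc)+

lemma self_in_rprin: "(c::'a::ring_1) \<in> rprin c"
  unfolding rprin_def by (auto intro: exI[of _ 1])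

lemma self_in_lprin: "(c::'a::ring_1) \<in> lprin c"
  unfolding lprin_def by (auto intro: exI[of _ 1])

lemma sum_all_rprin_rann_one:
  assumes "sum_all (rprin c) (rann (a::'a::ring_1))"
  obtains m v where "1 = c * m + v" "a * v = 0"
  using assms unfolding sum_all_def rprin_def rann_def by blast

lemma sum_all_lprin_lann_one:
  assumes "sum_all (lprin c) (lann (a::'a::ring_1))"
  obtains m v where "1 = m * c + v" "v * a = 0"
  using assms unfolding sum_all_def lprin_def lann_def by blast

lemma dsum_allI:
  assumes "\<And>r. \<exists>x\<in>A. \<exists>y\<in>B. r = x + y" "(0::'a::ring_1) \<in> A" "0 \<in> B"
    "\<And>z. z \<in> A \<Longrightarrow> z \<in> B \<Longrightarrow> z = 0"
  shows "dsum_all A B"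
  unfolding dsum_all_def sum_all_def using assms by blast

lemma dsum_all_imp_sum_all: "dsum_all A B \<Longrightarrow> sum_all A B"
  by (simp add: dsum_all_def)

lemma dsum_all_inter_zero: "dsum_all A B \<Longrightarrow> z \<in> A \<Longrightarrow> z \<in> B \<Longrightarrow> z = 0"
  unfolding dsum_all_def by blast

lemma zero_in_principal_annihilator:
  "(0::'a::ring_1) \<in> rprin c" "0 \<in> lprin c" "0 \<in> rann c" "0 \<in> lann c"
  unfolding rprin_def lprin_def rann_def lann_def by (auto intro: exI[of _ 0])

lemma dsum_all_rprin_rannI:
  fixes a c :: "'a::ring_1"
  assumes am: "a * (c * m) = a" and cw: "c = w * a * c"
  shows "dsum_all (rprin c) (rann a)"
proof (rule dsum_allI)
  fix r
  have "c * m * r \<in> rprin c" unfolding rprin_def by (auto simp: mult.assoc)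
  moreover have "a * (r - c * m * r) = 0"
    using am by (simp add: right_diff_distrib flip: mult.assoc)
  ultimately show "\<exists>x\<in>rprin c. \<exists>y\<in>rann a. r = x + y"
    unfolding rann_def by force
next
  fix z assume "z \<in> rprin c" "z \<in> rann a"
  then obtain n where "z = c * n" "a * z = 0" by (auto simp: rprin_def rann_def)
  then have "z = w * (a * z)" using cw by (metis mult.assoc)
  then show "z = 0" using \<open>a * z = 0\<close> by simp
qed (simp_all add: zero_in_principal_annihilator)

lemma dsum_all_lprin_lannI:
  fixes a c :: "'a::ring_1"
  assumes ma: "m * c * a = a" and cw: "c = c * a * w"
  shows "dsum_all (lprin c) (lann a)"
proof (rule dsum_allI)
  fix r
  have "r * (m * c) \<in> lprin c" unfolding lprin_def by (auto intro!: exI[of _ "r * m"] simp: mult.assoc)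
  moreover have "(r - r * (m * c)) * a = 0"
    using ma by (simp add: left_diff_distrib mult.assoc)
  ultimately show "\<exists>x\<in>lprin c. \<exists>y\<in>lann a. r = x + y"
    unfolding lann_def by force
next
  fix z assume "z \<in> lprin c" "z \<in> lann a"
  then obtain n where "z = n * c" "z * a = 0" by (auto simp: lprin_def lann_def)
  then have "z = z * a * w" using cw by (metis mult.assoc)
  then show "z = 0" using \<open>z * a = 0\<close> by simp
qed (simp_all add: zero_in_principal_annihilator)

lemma mult_eq_of_one_decomp_rann:
  fixes a b :: "'a::ring_1"
  assumes "1 = b * x + u" "a * u = 0"
  shows "a = a * b * x"
proof -
  have "a = a * (b * x + u)" using assms(1) by (metis mult.right_neutral)
  then show ?thesis using assms(2) by (simp add: distrib_left mult.assoc)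
qed

lemma mult_eq_of_one_decomp_lann:
  fixes a b :: "'a::ring_1"
  assumes "1 = x * b + u" "u * a = 0"
  shows "a = x * b * a"
proof -
  have "a = (x * b + u) * a" using assms(1) by (metis mult.left_neutral)
  then show ?thesis using assms(2) by (simp add: distrib_right)
qed

definition group_inverse :: "'a::ring_1 \<Rightarrow> 'a \<Rightarrow> bool" where
  "group_inverse a g \<longleftrightarrow> a * g * a = a \<and> g * a * g = g \<and> a * g = g * a"

lemma group_inverse_from_rprin_rann:
  fixes a :: "'a::ring_1"
  assumes d: "dsum_all (rprin a) (rann a)" and one: "1 = a * y + v" and v: "a * v = 0"
  shows "group_inverse a (a * y * y)"
proof -
  have aay: "a * a * y = a" using mult_eq_of_one_decomp_rann[OF one v] by simp
  have aya: "a * y * a = a"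
  proof -
    have "a - a * y * a = 0"
    proof (rule dsum_all_inter_zero[OF d])
      show "a - a * y * a \<in> rprin a" unfolding rprin_def
        by (auto intro!: exI[of _ "1 - y * a"] simp: right_diff_distrib mult.assoc)
      have "a * (a - a * y * a) = a * a - (a * a * y) * a"
        by (simp add: right_diff_distrib mult.assoc)
      then show "a - a * y * a \<in> rann a" unfolding rann_def using aay by simp
    qed
    then show ?thesis by simp
  qed
  have ayya: "a * y * y * a = a * y"
  proof -
    have "a * y * y * a - a * y = 0"
    proof (rule dsum_all_inter_zero[OF d])
      show "a * y * y * a - a * y \<in> rprin a" unfolding rprin_def
        by (auto intro!: exI[of _ "y * y * a - y"] simp: right_diff_distrib mult.assoc)
      have "a * (a * y * y * a - a * y) = (a * a * y) * y * a - a * a * y"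
        by (simp add: right_diff_distrib mult.assoc)
      also have "\<dots> = 0" using aay aya by simp
      finally show "a * y * y * a - a * y \<in> rann a" unfolding rann_def by simp
    qed
    then show ?thesis by simp
  qed
  have ag: "a * (a * y * y) = a * y" using aay by (metis mult.assoc)
  show ?thesis unfolding group_inverse_def
  proof (intro conjI)
    show "a * (a * y * y) * a = a" using ag aya by simp
    show "a * y * y * a * (a * y * y) = a * y * y" using ayya aya by (metis mult.assoc)
    show "a * (a * y * y) = a * y * y * a" using ag ayya by simp
  qed
qed

lemma group_inverse_from_lprin_lann:
  fixes a :: "'a::ring_1"
  assumes d: "dsum_all (lprin a) (lann a)" and one: "1 = y * a + v" and v: "v * a = 0"
  shows "group_inverse a (y * y * a)"
proof -
  have yaa: "y * a * a = a" using mult_eq_of_one_decomp_lann[OF one v] by simp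
  have aya: "a * y * a = a"
  proof -
    have "a - a * y * a = 0"
    proof (rule dsum_all_inter_zero[OF d])
      show "a - a * y * a \<in> lprin a" unfolding lprin_def
        by (auto intro!: exI[of _ "1 - a * y"] simp: left_diff_distrib mult.assoc)
      have "(a - a * y * a) * a = a * a - a * (y * a * a)"
        by (simp add: left_diff_distrib mult.assoc)
      then show "a - a * y * a \<in> lann a" unfolding lann_def using yaa by simp
    qed
    then show ?thesis by simp
  qed
  have ayya: "a * y * y * a = y * a"
  proof -
    have "a * y * y * a - y * a = 0"
    proof (rule dsum_all_inter_zero[OF d])
      show "a * y * y * a - y * a \<in> lprin a" unfolding lprin_def
        by (auto intro!: exI[of _ "a * y * y - y"] simp: left_diff_distrib mult.assoc)
      have "(a * y * y * a - y * a) * a = a * y * (y * a * a) - y * a * a"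
        by (simp add: left_diff_distrib mult.assoc)
      also have "\<dots> = 0" using yaa aya by simp
      finally show "a * y * y * a - y * a \<in> lann a" unfolding lann_def by simp
    qed
    then show ?thesis by simp
  qed
  have ga: "y * y * a * a = y * a" using yaa by (metis mult.assoc)
  show ?thesis unfolding group_inverse_def
  proof (intro conjI)
    show "a * (y * y * a) * a = a" using ayya yaa by (metis mult.assoc)
    show "y * y * a * a * (y * y * a) = y * y * a" using ga ayya by (metis mult.assoc)
    show "a * (y * y * a) = y * y * a * a" using ga ayya by (metis mult.assoc)
  qed
qed

lemma group_inverse_exists_rprin_rann:
  "dsum_all (rprin a) (rann (a::'a::ring_1)) \<Longrightarrow> \<exists>g. group_inverse a g"
  by (meson dsum_all_imp_sum_all group_inverse_from_rprin_rann sum_all_rprin_rann_one)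

lemma group_inverse_exists_lprin_lann:
  "dsum_all (lprin a) (lann (a::'a::ring_1)) \<Longrightarrow> \<exists>g. group_inverse a g"
  by (meson dsum_all_imp_sum_all group_inverse_from_lprin_lann sum_all_lprin_lann_one)

lemma eq_mult_adjoint_of_one_decomp_lann:
  fixes a :: "'a::ring_1"
  assumes inv: "involution s" and "1 = x * a + u" "u * s a = 0"
  shows "a = a * s a * s x"
proof -
  have "s (s a) = s (x * a * s a)" using mult_eq_of_one_decomp_lann[OF assms(2,3)] by simp
  then show ?thesis using inv by (simp add: involution_mult involution_invol mult.assoc)
qed

lemma exists_eq_mult_adjoint_rprin_rann:
  "sum_all (rprin (s a)) (rann (a::'a::ring_1)) \<Longrightarrow> \<exists>x. a = a * s a * x"
  by (meson mult_eq_of_one_decomp_rann sum_all_rprin_rann_one)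

lemma exists_eq_mult_adjoint_lprin_lann:
  "involution s \<Longrightarrow> sum_all (lprin a) (lann (s (a::'a::ring_1))) \<Longrightarrow> \<exists>x. a = a * s a * x"
  by (meson eq_mult_adjoint_of_one_decomp_lann sum_all_lprin_lann_one)

lemma is_dual_core_inverse_construct:
  fixes a :: "'a::ring_1"
  assumes inv: "involution s" and h: "a = a * s a * x" and g: "group_inverse a g"
  shows "is_dual_core_inverse s a (s x * a * g)"
proof -
  have aga: "a * g * a = a" and gag: "g * a * g = g" and ag: "a * g = g * a"
    using g by (auto simp: group_inverse_def)
  have sa: "s a = s x * a * s a"
    using arg_cong[OF h, of s] inv by (simp add: involution_mult involution_invol mult.assoc)
  have xa_herm: "s x * a = s a * x"
  proof -
    have "s x * a = (s x * a * s a) * x" using h by (metis mult.assoc)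
    then show ?thesis using sa by simp
  qed
  have axa: "a * s x * a = a" using h xa_herm by (simp add: mult.assoc)
  have "a * (s x * a * g) * a = a"
    using axa aga by (metis mult.assoc)
  moreover have "rprin (s x * a * g) = rprin (s a)"
  proof (rule rprin_eqI)
    show "s x * a * g = s a * (x * g)" using xa_herm by (simp add: mult.assoc)
    show "s a = s x * a * g * (a * s a)" using sa aga by (metis mult.assoc)
  qed
  moreover have "lprin (s x * a * g) = lprin a"
  proof (rule lprin_eqI)
    have "g = g * g * a" using gag ag by (simp add: mult.assoc)
    then show "s x * a * g = (s x * a * g * g) * a" by (metis mult.assoc)
    have "a * a * g = a" using aga ag by (metis mult.assoc)
    then show "a = (a * a) * (s x * a * g)" using axa by (metis mult.assoc)
  qed
  ultimately show ?thesis unfolding is_dual_core_inverse_def by simp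
qed

lemma dual_core_invertibleI:
  "involution s \<Longrightarrow> a = a * s a * x \<Longrightarrow> group_inverse a g \<Longrightarrow> dual_core_invertible s a"
  unfolding dual_core_invertible_def using is_dual_core_inverse_construct by blast

lemma is_dual_core_inverse_props:
  fixes a :: "'a::ring_1"
  assumes inv: "involution s" and d: "is_dual_core_inverse s a X"
  shows "s (X * a) = X * a" "X * a * s a = s a" "a * X * a = a" "X * a * X = X"
    "a * a * X = a" "X * X * a = X"
proof -
  have axa: "a * X * a = a" and rX: "rprin X = rprin (s a)" and lX: "lprin X = lprin a"
    using d by (auto simp: is_dual_core_inverse_def)
  have "X \<in> rprin (s a)" using rX self_in_rprin[of X] by simp
  then obtain p where p: "X = s a * p" by (auto simp: rprin_def)
  have "X \<in> lprin a" using lX self_in_lprin[of X] by simp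
  then obtain r where r: "X = r * a" by (auto simp: lprin_def)
  have "a \<in> lprin X" using lX self_in_lprin[of a] by simp
  then obtain t where t: "a = t * X" by (auto simp: lprin_def)
  have sa: "s a = s (X * a) * s a"
    using axa inv by (metis involution_mult mult.assoc)
  have Xa: "X * a = s (X * a) * (X * a)"
    using sa p by (metis mult.assoc)
  then show herm: "s (X * a) = X * a"
    using inv by (metis involution_mult involution_invol)
  show Xasa: "X * a * s a = s a" using sa herm by simp
  show "a * X * a = a" by (rule axa)
  show XaX: "X * a * X = X" using p Xasa by (metis mult.assoc)
  show "a * a * X = a" using t XaX by (metis mult.assoc)
  show "X * X * a = X" using r axa by (metis mult.assoc)
qed

lemma is_dual_core_inverse_unique:
  fixes a :: "'a::ring_1"
  assumes inv: "involution s"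
    and d: "is_dual_core_inverse s a X" and d': "is_dual_core_inverse s a X'"
  shows "X = X'"
proof -
  note P = is_dual_core_inverse_props[OF inv d] and P' = is_dual_core_inverse_props[OF inv d']
  have "X \<in> lprin a" using d self_in_lprin[of X] by (simp add: is_dual_core_inverse_def)
  then obtain r where r: "X = r * a" by (auto simp: lprin_def)
  have "X * a = s (X * a)" using P by simp
  also have "\<dots> = s (a * X' * a) * s X" using inv P' by (simp add: involution_mult)
  also have "\<dots> = s (X' * a) * s (X * a)" using inv by (simp add: involution_mult mult.assoc)
  also have "\<dots> = X' * (a * X * a)" using P P' by (simp add: mult.assoc)
  finally have Xa: "X * a = X' * a" using P by simp
  have "X * a * X' = X" using r P' by (metis mult.assoc)
  then show ?thesis using Xa P' by simp
qed

lemma dual_core_inv_eqI: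
  "involution s \<Longrightarrow> is_dual_core_inverse s a X \<Longrightarrow> dual_core_inv s a = X"
  unfolding dual_core_inv_def by (blast intro: is_dual_core_inverse_unique)

lemma dual_core_inv_construct:
  "involution s \<Longrightarrow> a = a * s a * x \<Longrightarrow> group_inverse a g \<Longrightarrow> dual_core_inv s a = s x * a * g"
  by (simp add: dual_core_inv_eqI is_dual_core_inverse_construct)

lemma dual_core_invertible_dsums:
  fixes a :: "'a::ring_1"
  assumes inv: "involution s" and D: "dual_core_invertible s a"
  shows "dsum_all (rprin a) (rann a)" "dsum_all (lprin a) (lann a)"
    "dsum_all (rprin (s a)) (rann a)" "dsum_all (lprin a) (lann (s a))"
proof -
  obtain X where X: "is_dual_core_inverse s a X"
    using D unfolding dual_core_invertible_def by blast
  note P = is_dual_core_inverse_props[OF inv X]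
  have Xa: "X * a = s a * s X" using P(1) inv by (metis involution_mult)
  have aXXaa: "a * X * X * a * a = a" using P by (metis mult.assoc)
  show "dsum_all (rprin a) (rann a)"
    by (rule dsum_all_rprin_rannI[of a a X "a * X * X"]) (use P aXXaa in \<open>simp_all add: mult.assoc\<close>)
  show "dsum_all (lprin a) (lann a)"
    by (rule dsum_all_lprin_lannI[of "a * X * X" a a X]) (use P aXXaa in \<open>simp_all add: mult.assoc\<close>)
  show "dsum_all (rprin (s a)) (rann a)"
    by (rule dsum_all_rprin_rannI[of a "s a" "s X" X]) (use P Xa in \<open>simp_all add: mult.assoc\<close>)
  show "dsum_all (lprin a) (lann (s a))"
    by (rule dsum_all_lprin_lannI[of X a "s a" "s X"]) (use P Xa in \<open>simp_all add: mult.assoc\<close>)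
qed

lemma dual_core_inv_formulas:
  fixes a :: "'a::ring_1"
  assumes inv: "involution s" and D: "dual_core_invertible s a"
    and u2: "u2 \<in> lann (s a)" and v2: "v2 \<in> lann a" and u1: "u1 \<in> rann a" and v1: "v1 \<in> rann a"
    and one_x1: "1 = s a * x1 + u1" and one_x2: "1 = x2 * a + u2"
    and one_y1: "1 = a * y1 + v1" and one_y2: "1 = y2 * a + v2"
  shows "dual_core_inv s a = s x1 * a * y1 \<and> dual_core_inv s a = s x1 * a * y2\<^sup>2 * a \<and>
         dual_core_inv s a = x2 * a * y1 \<and> dual_core_inv s a = x2 * a * y2\<^sup>2 * a"
proof -
  have h1: "a = a * s a * x1"
    using u1 by (intro mult_eq_of_one_decomp_rann[OF one_x1]) (simp add: rann_def)
  have h2: "a = a * s a * s x2"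
    using u2 by (intro eq_mult_adjoint_of_one_decomp_lann[OF inv one_x2]) (simp add: lann_def)
  have g1: "group_inverse a (a * y1 * y1)"
    using v1 by (intro group_inverse_from_rprin_rann[OF dual_core_invertible_dsums(1)[OF inv D] one_y1])
      (simp add: rann_def)
  have g2: "group_inverse a (y2 * y2 * a)"
    using v2 by (intro group_inverse_from_lprin_lann[OF dual_core_invertible_dsums(2)[OF inv D] one_y2])
      (simp add: lann_def)
  have aay1: "a * a * y1 = a"
    using v1 by (intro mult_eq_of_one_decomp_rann[OF one_y1, symmetric]) (simp add: rann_def)
  have "c * a * (a * y1 * y1) = c * a * y1" for c using aay1 by (metis mult.assoc)
  moreover have "c * a * (y2 * y2 * a) = c * a * y2\<^sup>2 * a" for c
    by (simp add: power2_eq_square mult.assoc)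
  ultimately show ?thesis
    using dual_core_inv_construct[OF inv h1 g1] dual_core_inv_construct[OF inv h1 g2]
      dual_core_inv_construct[OF inv h2 g1] dual_core_inv_construct[OF inv h2 g2]
    by (simp add: involution_invol[OF inv])
qed

theorem proposition2p12:
  fixes s :: "'a::ring_1 \<Rightarrow> 'a" and a :: 'a
  assumes "involution s"
  shows "(dual_core_invertible s a \<longleftrightarrow> dsum_all (rprin (s a)) (rann a) \<and> dsum_all (rprin a) (rann a))
       \<and> (dual_core_invertible s a \<longleftrightarrow> sum_all (rprin (s a)) (rann a) \<and> dsum_all (rprin a) (rann a))
       \<and> (dual_core_invertible s a \<longleftrightarrow> dsum_all (lprin a) (lann (s a)) \<and> dsum_all (rprin a) (rann a))
       \<and> (dual_core_invertible s a \<longleftrightarrow> sum_all (lprin a) (lann (s a)) \<and> dsum_all (rprin a) (rann a))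
       \<and> (dual_core_invertible s a \<longleftrightarrow> dsum_all (rprin (s a)) (rann a) \<and> dsum_all (lprin a) (lann a))
       \<and> (dual_core_invertible s a \<longleftrightarrow> sum_all (rprin (s a)) (rann a) \<and> dsum_all (lprin a) (lann a))
       \<and> (dual_core_invertible s a \<longleftrightarrow> dsum_all (lprin a) (lann (s a)) \<and> dsum_all (lprin a) (lann a))
       \<and> (dual_core_invertible s a \<longleftrightarrow> sum_all (lprin a) (lann (s a)) \<and> dsum_all (lprin a) (lann a))
       \<and> (dual_core_invertible s a \<longrightarrow>
           (\<forall>x1 x2 y1 y2 u1 u2 v1 v2.
              u2 \<in> lann (s a) \<and> v2 \<in> lann a \<and> u1 \<in> rann a \<and> v1 \<in> rann a \<and>
              1 = s a * x1 + u1 \<and> 1 = x2 * a + u2 \<and> 1 = a * y1 + v1 \<and> 1 = y2 * a + v2 \<longrightarrow>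
              dual_core_inv s a = s x1 * a * y1 \<and>
              dual_core_inv s a = s x1 * a * y2\<^sup>2 * a \<and>
              dual_core_inv s a = x2 * a * y1 \<and>
              dual_core_inv s a = x2 * a * y2\<^sup>2 * a))"
proof -
  note inv = assms
  have eq_mult_adjoint: "\<exists>x. a = a * s a * x"
    if "sum_all (rprin (s a)) (rann a) \<or> sum_all (lprin a) (lann (s a))"
    using that exists_eq_mult_adjoint_rprin_rann exists_eq_mult_adjoint_lprin_lann[OF inv] by blast
  have group_inv: "\<exists>g. group_inverse a g"
    if "dsum_all (rprin a) (rann a) \<or> dsum_all (lprin a) (lann a)"
    using that group_inverse_exists_rprin_rann group_inverse_exists_lprin_lann by blast
  show ?thesis
    using dual_core_invertible_dsums[OF inv] dual_core_invertibleI[OF inv]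
      eq_mult_adjoint group_inv dsum_all_imp_sum_all dual_core_inv_formulas[OF inv]
    by meson
qed

end
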